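(* Let $\mathbb{F}$ be an infinite field with $\operatorname{char}(\mathbb{F})\neq 2$, let $G$ be a group with a group involution $\ast$, extended $\mathbb{F}$-linearly to $\mathbb{F}G$. Suppose that $\mathbb{F}G$ is normal with respect to $\ast$. Then for all $g,h\in G$, either $gh=hg$ or $gh=g^\ast h^\ast$.
   Context: A group involution on $G$ is a map $\ast:G\to G$ with $(gh)^\ast=h^\ast g^\ast$ and $(g^\ast)^\ast=g$ for all $g,h\in G$; it is extended $\mathbb{F}$-linearly to an algebra involution of the group algebra $\mathbb{F}G$, $(\sum \alpha_g g)^\ast=\sum\alpha_g g^\ast$. The algebra $\mathbb{F}G$ is called normal (with respect to $\ast$) if $\alpha\alpha^\ast=\alpha^\ast\alpha$ for all $\alpha\in\mathbb{F}G$. *)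

theory Defs
  imports "HOL-Algebra.Group"
begin

definition group_involution :: "('g, 'b) monoid_scheme \<Rightarrow> ('g \<Rightarrow> 'g) \<Rightarrow> bool" where
  "group_involution G s \<longleftrightarrow>
     (\<forall>x\<in>carrier G. s x \<in> carrier G) \<and>
     (\<forall>x\<in>carrier G. \<forall>y\<in>carrier G. s (x \<otimes>\<^bsub>G\<^esub> y) = s y \<otimes>\<^bsub>G\<^esub> s x) \<and>
     (\<forall>x\<in>carrier G. s (s x) = x)"

definition group_algebra :: "('g, 'b) monoid_scheme \<Rightarrow> ('g \<Rightarrow> 'a::field) set" where
  "group_algebra G = {\<alpha>. finite {g\<in>carrier G. \<alpha> g \<noteq> 0} \<and> (\<forall>x. x \<notin> carrier G \<longrightarrow> \<alpha> x = 0)}"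

definition ga_mult :: "('g, 'b) monoid_scheme \<Rightarrow> ('g \<Rightarrow> 'a::field) \<Rightarrow> ('g \<Rightarrow> 'a) \<Rightarrow> ('g \<Rightarrow> 'a)" where
  "ga_mult G \<alpha> \<beta> = (\<lambda>x. if x \<in> carrier G
      then (\<Sum>g\<in>{g\<in>carrier G. \<alpha> g \<noteq> 0}. \<alpha> g * \<beta> (inv\<^bsub>G\<^esub> g \<otimes>\<^bsub>G\<^esub> x))
      else 0)"

text \<open>Linear extension of the involution: (\<Sum> \<alpha>_g g)* = \<Sum> \<alpha>_g g*, i.e. the coefficient at x is \<alpha>(x*).\<close>
definition ga_star :: "('g, 'b) monoid_scheme \<Rightarrow> ('g \<Rightarrow> 'g) \<Rightarrow> ('g \<Rightarrow> 'a::field) \<Rightarrow> ('g \<Rightarrow> 'a)" where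
  "ga_star G s \<alpha> = (\<lambda>x. if x \<in> carrier G then \<alpha> (s x) else 0)"

definition ga_normal :: "('g, 'b) monoid_scheme \<Rightarrow> ('g \<Rightarrow> 'g) \<Rightarrow> 'a::field itself \<Rightarrow> bool" where
  "ga_normal G s _ \<longleftrightarrow> (\<forall>\<alpha>::'g \<Rightarrow> 'a \<in> group_algebra G.
      ga_mult G \<alpha> (ga_star G s \<alpha>) = ga_mult G (ga_star G s \<alpha>) \<alpha>)"

end

theory Submission
  imports Defs "HOL-Library.Function_Algebras"
begin

text \<open>Polarising the normality identity for \<open>\<alpha> = g\<close> and \<open>\<beta> = h\<^sup>*\<close> gives
  \<open>gh + h\<^sup>*g\<^sup>* = g\<^sup>*h\<^sup>* + hg\<close> in \<open>\<bbbF>G\<close>. The left-hand side has a nonzero coefficient at \<open>gh\<close>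
  (it is \<open>1\<close> or \<open>2\<close>, and \<open>2 \<noteq> 0\<close> as the characteristic is not \<open>2\<close>), so \<open>gh\<close> must occur
  on the right, i.e. \<open>gh = g\<^sup>*h\<^sup>*\<close> or \<open>gh = hg\<close>.\<close>

lemma ga_mult_eq_sum_over:
  assumes "finite S" "{g\<in>carrier G. \<alpha> g \<noteq> 0} \<subseteq> S" "S \<subseteq> carrier G"
  shows "ga_mult G \<alpha> \<beta> x =
    (if x \<in> carrier G then \<Sum>g\<in>S. \<alpha> g * \<beta> (inv\<^bsub>G\<^esub> g \<otimes>\<^bsub>G\<^esub> x) else 0)"
  unfolding ga_mult_def using assms by (auto intro!: sum.mono_neutral_left)

lemma group_algebra_add:
  assumes "\<alpha> \<in> group_algebra G" "\<beta> \<in> group_algebra G"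
  shows "\<alpha> + \<beta> \<in> group_algebra G"
proof -
  have "{x\<in>carrier G. (\<alpha> + \<beta>) x \<noteq> 0} \<subseteq> {x\<in>carrier G. \<alpha> x \<noteq> 0} \<union> {x\<in>carrier G. \<beta> x \<noteq> 0}"
    by auto
  then show ?thesis
    using assms unfolding group_algebra_def by (auto intro: finite_subset)
qed

lemma ga_mult_add_left:
  assumes "\<alpha> \<in> group_algebra G" "\<alpha>' \<in> group_algebra G"
  shows "ga_mult G (\<alpha> + \<alpha>') \<beta> = ga_mult G \<alpha> \<beta> + ga_mult G \<alpha>' \<beta>"
proof
  fix x
  let ?S = "{g\<in>carrier G. \<alpha> g \<noteq> 0} \<union> {g\<in>carrier G. \<alpha>' g \<noteq> 0}"
  have S: "finite ?S" "?S \<subseteq> carrier G"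
    using assms by (auto simp: group_algebra_def)
  have sum_over_S: "ga_mult G \<gamma> \<beta> x =
      (if x \<in> carrier G then \<Sum>g\<in>?S. \<gamma> g * \<beta> (inv\<^bsub>G\<^esub> g \<otimes>\<^bsub>G\<^esub> x) else 0)"
    if "{g\<in>carrier G. \<gamma> g \<noteq> 0} \<subseteq> ?S" for \<gamma>
    by (rule ga_mult_eq_sum_over[OF S(1) that S(2)])
  have "ga_mult G (\<alpha> + \<alpha>') \<beta> x = ga_mult G \<alpha> \<beta> x + ga_mult G \<alpha>' \<beta> x"
    by (subst (1 2 3) sum_over_S) (auto simp: distrib_right sum.distrib)
  then show "ga_mult G (\<alpha> + \<alpha>') \<beta> x = (ga_mult G \<alpha> \<beta> + ga_mult G \<alpha>' \<beta>) x"
    by simp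
qed

lemma ga_mult_add_right: "ga_mult G \<alpha> (\<beta> + \<beta>') = ga_mult G \<alpha> \<beta> + ga_mult G \<alpha> \<beta>'"
  unfolding ga_mult_def by (auto simp: distrib_left sum.distrib)

lemma ga_star_add: "ga_star G s (\<alpha> + \<beta>) = ga_star G s \<alpha> + ga_star G s \<beta>"
  unfolding ga_star_def by auto

lemma ga_star_in_group_algebra:
  assumes "group_involution G s" "\<alpha> \<in> group_algebra G"
  shows "ga_star G s \<alpha> \<in> group_algebra G"
proof -
  have "{x\<in>carrier G. ga_star G s \<alpha> x \<noteq> 0} \<subseteq> s ` {x\<in>carrier G. \<alpha> x \<noteq> 0}"
    using assms(1) unfolding group_involution_def ga_star_def by (auto intro: rev_image_eqI)
  moreover have "finite {x\<in>carrier G. \<alpha> x \<noteq> 0}"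
    using assms(2) unfolding group_algebra_def by blast
  ultimately have "finite {x\<in>carrier G. ga_star G s \<alpha> x \<noteq> 0}"
    by (meson finite_imageI finite_subset)
  then show ?thesis
    unfolding group_algebra_def by (simp add: ga_star_def)
qed

lemma ga_normal_polarized:
  assumes "ga_normal G s TYPE('a::field)" "group_involution G s"
    and "\<alpha> \<in> group_algebra G" "\<beta> \<in> group_algebra G"
  shows "ga_mult G \<alpha> (ga_star G s \<beta>) + ga_mult G \<beta> (ga_star G s \<alpha>) =
    ga_mult G (ga_star G s \<alpha>) \<beta> + ga_mult G (ga_star G s \<beta>) (\<alpha> :: 'g \<Rightarrow> 'a)"
proof -
  have normal: "ga_mult G \<gamma> (ga_star G s \<gamma>) = ga_mult G (ga_star G s \<gamma>) \<gamma>"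
    if "\<gamma> \<in> group_algebra G" for \<gamma> :: "'g \<Rightarrow> 'a"
    using assms(1) that unfolding ga_normal_def by blast
  have "\<alpha> + \<beta> \<in> group_algebra G"
    using assms(3,4) by (rule group_algebra_add)
  from normal[OF this] normal[OF assms(3)] normal[OF assms(4)] show ?thesis
    by (simp add: ga_star_add ga_mult_add_left assms ga_star_in_group_algebra
        ga_mult_add_right algebra_simps)
qed

definition ga_elem :: "'g \<Rightarrow> 'g \<Rightarrow> 'a::field" where
  "ga_elem a = (\<lambda>x. if x = a then 1 else 0)"

lemma ga_elem_in_group_algebra:
  assumes "a \<in> carrier G"
  shows "ga_elem a \<in> group_algebra G"
proof -
  have "{g\<in>carrier G. ga_elem a g \<noteq> 0} \<subseteq> {a}"
    by (auto simp: ga_elem_def)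
  then show ?thesis
    using assms by (auto simp: group_algebra_def ga_elem_def intro: finite_subset)
qed

lemma ga_star_ga_elem:
  assumes "group_involution G s" "a \<in> carrier G"
  shows "ga_star G s (ga_elem a) = ga_elem (s a)"
  using assms unfolding ga_star_def ga_elem_def group_involution_def by metis

lemma ga_mult_ga_elem:
  assumes "group G" "a \<in> carrier G" "c \<in> carrier G"
  shows "ga_mult G (ga_elem a) (ga_elem c) = ga_elem (a \<otimes>\<^bsub>G\<^esub> c)"
proof
  fix x
  show "ga_mult G (ga_elem a) (ga_elem c) x = ga_elem (a \<otimes>\<^bsub>G\<^esub> c) x"
  proof (cases "x \<in> carrier G")
    case True
    have "(inv\<^bsub>G\<^esub> a \<otimes>\<^bsub>G\<^esub> x = c) = (x = a \<otimes>\<^bsub>G\<^esub> c)"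
      using assms True by (metis group.inv_solve_left group.is_monoid monoid.m_closed)
    moreover have "ga_mult G (ga_elem a) (ga_elem c) x = ga_elem c (inv\<^bsub>G\<^esub> a \<otimes>\<^bsub>G\<^esub> x)"
      using True assms(2) by (subst ga_mult_eq_sum_over[where S = "{a}"]) (auto simp: ga_elem_def)
    ultimately show ?thesis
      by (simp add: ga_elem_def)
  next
    case False
    then have "x \<noteq> a \<otimes>\<^bsub>G\<^esub> c"
      using assms by (auto simp: group.is_monoid monoid.m_closed)
    with False show ?thesis
      by (simp add: ga_mult_def ga_elem_def)
  qed
qed

lemma two_neq_zero_if_CHAR_neq_2:
  assumes "CHAR('a::idom) \<noteq> 2"
  shows "(2::'a) \<noteq> 0"
proof
  assume "(2::'a) = 0"
  then have "of_nat 2 = (0::'a)"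
    by simp
  then have "CHAR('a) dvd 2"
    by (simp only: of_nat_eq_0_iff_char_dvd)
  then have "CHAR('a) \<le> 2" "CHAR('a) \<noteq> 0"
    by (auto dest: dvd_imp_le intro!: Nat.gr0I)
  with assms CHAR_not_1' show False
    by (metis One_nat_def le_Suc_eq le_zero_eq numeral_2_eq_2)
qed

theorem lemma3:
  fixes G :: "('g, 'b) monoid_scheme" and s :: "'g \<Rightarrow> 'g"
  assumes "group G"
    and "infinite (UNIV :: 'a::field set)"
    and "CHAR('a) \<noteq> 2"
    and "group_involution G s"
    and "ga_normal G s TYPE('a)"
  shows "\<forall>g\<in>carrier G. \<forall>h\<in>carrier G.
           g \<otimes>\<^bsub>G\<^esub> h = h \<otimes>\<^bsub>G\<^esub> g \<or> g \<otimes>\<^bsub>G\<^esub> h = s g \<otimes>\<^bsub>G\<^esub> s h"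
proof (intro ballI)
  fix g h assume g: "g \<in> carrier G" and h: "h \<in> carrier G"
  have sh: "s h \<in> carrier G" and ssh: "s (s h) = h"
    using assms(4) h unfolding group_involution_def by auto
  have sg: "s g \<in> carrier G"
    using assms(4) g unfolding group_involution_def by auto
  have "ga_mult G (ga_elem g) (ga_elem h) + ga_mult G (ga_elem (s h)) (ga_elem (s g)) =
      ga_mult G (ga_elem (s g)) (ga_elem (s h)) + ga_mult G (ga_elem h) (ga_elem g :: 'g \<Rightarrow> 'a)"
    using ga_normal_polarized[OF assms(5,4) ga_elem_in_group_algebra[OF g]
        ga_elem_in_group_algebra[OF sh]]
    by (simp add: ga_star_ga_elem assms(4) g sh ssh)
  then have "ga_elem (g \<otimes>\<^bsub>G\<^esub> h) + ga_elem (s h \<otimes>\<^bsub>G\<^esub> s g) =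
      ga_elem (s g \<otimes>\<^bsub>G\<^esub> s h) + (ga_elem (h \<otimes>\<^bsub>G\<^esub> g) :: 'g \<Rightarrow> 'a)"
    by (simp add: ga_mult_ga_elem assms(1) g h sg sh)
  from fun_cong[OF this, of "g \<otimes>\<^bsub>G\<^esub> h"] two_neq_zero_if_CHAR_neq_2[OF assms(3)]
  show "g \<otimes>\<^bsub>G\<^esub> h = h \<otimes>\<^bsub>G\<^esub> g \<or> g \<otimes>\<^bsub>G\<^esub> h = s g \<otimes>\<^bsub>G\<^esub> s h"
    by (auto simp: ga_elem_def split: if_splits)
qed

end
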